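(* Let $\boldsymbol{R}=[r_{ij}]\in\mathbb{C}^{N\times N}$ be Hermitian. Define $\delta_1=0$ and $\delta_k=\sum_{i=1}^{k-1}|r_{ki}|$ for $k=2,\ldots,N$; define $a_k=2\delta_k+4\sum_{i=1}^{N-k}\delta_{k+i}$ for $k=1,\ldots,N-1$ and $a_N=2\delta_N$; and let $\overline{\boldsymbol{R}}=\boldsymbol{R}-\mathrm{Diag}(\boldsymbol{R})+\mathrm{diag}(a_1,\ldots,a_N)$. Let $\boldsymbol{g}\in\Omega^N$ be the output of the greedy method: $\boldsymbol{g}(1)=1$ and, for $k=1,\ldots,N-1$, $\boldsymbol{g}(k+1)$ is a maximizer over $x\in\Omega$ of $[\boldsymbol{g}(1),\ldots,\boldsymbol{g}(k),x]^H\boldsymbol{R}_{k+1}[\boldsymbol{g}(1),\ldots,\boldsymbol{g}(k),x]$. If $\mathrm{Tr}(\overline{\boldsymbol{R}})\le\mathrm{Tr}(\boldsymbol{R})$, then \[ \boldsymbol{g}^H\boldsymbol{R}\boldsymbol{g}\ \ge\ \Big(1-\frac{1}{e}\Big)\max_{\boldsymbol{s}\in\Omega^N}\boldsymbol{s}^H\boldsymbol{R}\boldsymbol{s}. \]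
   Context: $\Omega=\{x\in\mathbb{C}:|x|=1\}$. $\boldsymbol{R}_m$ denotes the principal submatrix of $\boldsymbol{R}$ formed by its first $m$ rows and first $m$ columns, and $[c_1,\ldots,c_m]$ denotes the column vector with entries $c_1,\ldots,c_m$. $\mathrm{Diag}(\boldsymbol{R})$ is the diagonal matrix with the diagonal of $\boldsymbol{R}$; $\mathrm{diag}(a_1,\ldots,a_N)$ is the diagonal matrix with entries $a_1,\ldots,a_N$. $\mathrm{Tr}$ denotes the trace. Empty sums are zero. *)

theory Defs
  imports Complex_Main
begin

text \<open>Matrices in C^{N x N} are functions nat => nat => complex, indices 1..N;
vectors in C^N are functions nat => complex, indices 1..N.\<close>

definition hermitian :: "nat \<Rightarrow> (nat \<Rightarrow> nat \<Rightarrow> complex) \<Rightarrow> bool" where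
  "hermitian N R \<longleftrightarrow> (\<forall>i\<in>{1..N}. \<forall>j\<in>{1..N}. R i j = cnj (R j i))"

text \<open>s^H R_m s, using the leading m x m principal submatrix and the first m entries of s.\<close>
definition qform :: "nat \<Rightarrow> (nat \<Rightarrow> nat \<Rightarrow> complex) \<Rightarrow> (nat \<Rightarrow> complex) \<Rightarrow> complex" where
  "qform m R s = (\<Sum>i=1..m. \<Sum>j=1..m. cnj (s i) * R i j * s j)"

definition unimod_vec :: "nat \<Rightarrow> (nat \<Rightarrow> complex) \<Rightarrow> bool" where
  "unimod_vec N s \<longleftrightarrow> (\<forall>i\<in>{1..N}. cmod (s i) = 1)"

definition mtrace :: "nat \<Rightarrow> (nat \<Rightarrow> nat \<Rightarrow> complex) \<Rightarrow> complex" where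
  "mtrace N R = (\<Sum>k=1..N. R k k)"

definition delta :: "(nat \<Rightarrow> nat \<Rightarrow> complex) \<Rightarrow> nat \<Rightarrow> real" where
  "delta R k = (if k = 1 then 0 else (\<Sum>i=1..k-1. cmod (R k i)))"

definition acoef :: "nat \<Rightarrow> (nat \<Rightarrow> nat \<Rightarrow> complex) \<Rightarrow> nat \<Rightarrow> real" where
  "acoef N R k = (if k < N then 2 * delta R k + 4 * (\<Sum>i=1..N-k. delta R (k+i))
                  else 2 * delta R N)"

definition Rbar :: "nat \<Rightarrow> (nat \<Rightarrow> nat \<Rightarrow> complex) \<Rightarrow> nat \<Rightarrow> nat \<Rightarrow> complex" where
  "Rbar N R i j = (if i = j then complex_of_real (acoef N R i) else R i j)"

definition greedy_output :: "nat \<Rightarrow> (nat \<Rightarrow> nat \<Rightarrow> complex) \<Rightarrow> (nat \<Rightarrow> complex) \<Rightarrow> bool" where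
  "greedy_output N R g \<longleftrightarrow> unimod_vec N g \<and> g 1 = 1 \<and>
     (\<forall>k\<in>{1..N-1}. \<forall>x. cmod x = 1 \<longrightarrow>
        Re (qform (k+1) R (g(k+1 := x))) \<le> Re (qform (k+1) R g))"

end

theory Submission
  imports Defs
begin

text \<open>Appending an entry of modulus one to a vector changes its quadratic form by the new diagonal
entry plus twice a cross term. The greedy step can always flip the sign of the new entry, so its
cross term is nonnegative and the greedy value is at least the trace \<open>T\<close>. Every cross term is at
most the corresponding \<open>\<delta>\<^sub>k\<close>, so the optimum is at most \<open>T + 2D\<close> with \<open>D = \<Sum>\<delta>\<^sub>k\<close>. Since
\<open>\<delta>\<^sub>1 = 0\<close>, the trace hypothesis forces \<open>T \<ge> 6D\<close>, and then \<open>(1 - 1/e)(T + 2D) \<le> T\<close>.\<close>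

definition row_dot :: "(nat \<Rightarrow> nat \<Rightarrow> complex) \<Rightarrow> nat \<Rightarrow> (nat \<Rightarrow> complex) \<Rightarrow> complex" where
  "row_dot R m s = (\<Sum>i=1..m. R (Suc m) i * s i)"

lemma hermitian_column:
  assumes "hermitian N R" "Suc m \<le> N"
  shows "\<forall>i\<in>{1..m}. R i (Suc m) = cnj (R (Suc m) i)"
proof
  fix i assume "i \<in> {1..m}"
  with assms show "R i (Suc m) = cnj (R (Suc m) i)"
    unfolding hermitian_def by (meson atLeastAtMost_iff le_SucI le_trans nat_le_linear not_less_eq_eq)
qed

lemma delta_nonneg: "delta R k \<ge> 0"
  unfolding delta_def by (auto intro: sum_nonneg)

lemma delta_Suc: "delta R (Suc m) = (\<Sum>i=1..m. cmod (R (Suc m) i))"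
  unfolding delta_def by (cases m) auto

lemma qform_Suc:
  "qform (Suc m) R s = qform m R s + cnj (s (Suc m)) * R (Suc m) (Suc m) * s (Suc m)
     + cnj (s (Suc m)) * row_dot R m s + (\<Sum>i=1..m. cnj (s i) * R i (Suc m)) * s (Suc m)"
  unfolding qform_def row_dot_def
  by (simp add: sum.distrib sum_distrib_left sum_distrib_right algebra_simps)

lemma Re_qform_Suc:
  assumes herm: "\<forall>i\<in>{1..m}. R i (Suc m) = cnj (R (Suc m) i)" and unit: "cmod (s (Suc m)) = 1"
  shows "Re (qform (Suc m) R s)
       = Re (qform m R s) + Re (R (Suc m) (Suc m)) + 2 * Re (cnj (s (Suc m)) * row_dot R m s)"
proof -
  have diag: "cnj (s (Suc m)) * R (Suc m) (Suc m) * s (Suc m) = R (Suc m) (Suc m)"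
    using unit by (simp add: complex_mult_cnj cmod_def mult_ac)
  have "(\<Sum>i=1..m. cnj (s i) * R i (Suc m)) = (\<Sum>i=1..m. cnj (R (Suc m) i * s i))"
    using herm by (intro sum.cong) (auto simp: mult.commute)
  then have cross: "(\<Sum>i=1..m. cnj (s i) * R i (Suc m)) * s (Suc m)
      = cnj (cnj (s (Suc m)) * row_dot R m s)"
    unfolding row_dot_def by (simp add: mult.commute)
  show ?thesis
    unfolding qform_Suc diag cross by simp
qed

lemma Re_cross_le_delta:
  assumes "\<forall>i\<in>{1..m}. cmod (s i) = 1" "cmod (s (Suc m)) = 1"
  shows "Re (cnj (s (Suc m)) * row_dot R m s) \<le> delta R (Suc m)"
proof -
  have "Re (cnj (s (Suc m)) * row_dot R m s) \<le> cmod (cnj (s (Suc m)) * row_dot R m s)"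
    by (rule complex_Re_le_cmod)
  also have "\<dots> = cmod (\<Sum>i=1..m. R (Suc m) i * s i)"
    using assms(2) by (simp add: norm_mult row_dot_def)
  also have "\<dots> \<le> (\<Sum>i=1..m. cmod (R (Suc m) i * s i))"
    by (rule norm_sum)
  also have "\<dots> = delta R (Suc m)"
    using assms(1) unfolding delta_Suc by (intro sum.cong) (auto simp: norm_mult)
  finally show ?thesis .
qed

lemma Re_qform_le_trace_plus_delta:
  assumes "hermitian N R" "unimod_vec N s" "m \<le> N"
  shows "Re (qform m R s) \<le> (\<Sum>k=1..m. Re (R k k) + 2 * delta R k)"
  using assms(3)
proof (induction m)
  case 0
  then show ?case by (simp add: qform_def)
next
  case (Suc m)
  have unit: "\<forall>i\<in>{1..m}. cmod (s i) = 1" "cmod (s (Suc m)) = 1"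
    using assms(2) Suc.prems unfolding unimod_vec_def by auto
  note herm = hermitian_column[OF assms(1) Suc.prems]
  from Re_qform_Suc[of m R s, OF herm unit(2)] Re_cross_le_delta[OF unit, of R] Suc
  show ?case by simp
qed

lemma greedy_Re_cross_nonneg:
  assumes "hermitian N R" "greedy_output N R g" "Suc m \<le> N"
  shows "Re (cnj (g (Suc m)) * row_dot R m g) \<ge> 0"
proof (cases m)
  case 0
  then show ?thesis by (simp add: row_dot_def)
next
  case (Suc m')
  note herm = hermitian_column[OF assms(1,3)]
  have unit: "cmod (g (Suc m)) = 1"
    using assms(2,3) unfolding greedy_output_def unimod_vec_def by auto
  define h where "h = g(Suc m := - g (Suc m))"
  have greedy: "Re (qform (Suc m) R h) \<le> Re (qform (Suc m) R g)"
    using assms(2,3) Suc unit unfolding greedy_output_def h_def by auto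
  have "qform m R h = qform m R g" "row_dot R m h = row_dot R m g"
    unfolding qform_def row_dot_def h_def by (auto intro!: sum.cong)
  then have "Re (qform (Suc m) R h)
      = Re (qform m R g) + Re (R (Suc m) (Suc m)) - 2 * Re (cnj (g (Suc m)) * row_dot R m g)"
    using Re_qform_Suc[of m R h, OF herm] unit by (simp add: h_def)
  with greedy Re_qform_Suc[of m R g, OF herm unit] show ?thesis
    by linarith
qed

lemma greedy_Re_qform_ge_trace:
  assumes "hermitian N R" "greedy_output N R g" "m \<le> N"
  shows "Re (qform m R g) \<ge> (\<Sum>k=1..m. Re (R k k))"
  using assms(3)
proof (induction m)
  case 0
  then show ?case by (simp add: qform_def)
next
  case (Suc m)
  note herm = hermitian_column[OF assms(1) Suc.prems]
  have "cmod (g (Suc m)) = 1"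
    using assms(2) Suc.prems unfolding greedy_output_def unimod_vec_def by auto
  from Re_qform_Suc[of m R g, OF herm this] greedy_Re_cross_nonneg[OF assms(1,2) Suc.prems] Suc
  show ?case by simp
qed

lemma acoef_ge:
  assumes "k \<le> N"
  shows "acoef N R k \<ge> 2 * delta R k + 4 * (if k < N then delta R (Suc k) else 0)"
proof (cases "k < N")
  case True
  have "delta R (k + 1) \<le> (\<Sum>i=1..N-k. delta R (k + i))"
    using True by (intro member_le_sum[where f = "\<lambda>i. delta R (k + i)"] delta_nonneg) auto
  with True show ?thesis
    unfolding acoef_def by simp
next
  case False
  with assms show ?thesis
    unfolding acoef_def by simp
qed

lemma sum_delta_shift:
  assumes "N \<ge> 1"
  shows "(\<Sum>k=1..N. if k < N then delta R (Suc k) else 0) = (\<Sum>k=1..N. delta R k)"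
proof -
  obtain M where N: "N = Suc M"
    using assms by (cases N) auto
  have "(\<Sum>k=1..N. if k < N then delta R (Suc k) else 0) = (\<Sum>k=1..M. delta R (Suc k))"
    unfolding N by (auto intro: sum.cong)
  also have "\<dots> = (\<Sum>k=Suc 1..Suc M. delta R k)"
    by (rule sum.shift_bounds_cl_Suc_ivl[symmetric])
  also have "\<dots> = delta R 1 + (\<Sum>k=Suc 1..Suc M. delta R k)"
    by (simp add: delta_def)
  also have "\<dots> = (\<Sum>k=1..N. delta R k)"
    unfolding N by (rule sum.atLeast_Suc_atMost[symmetric]) simp
  finally show ?thesis .
qed

lemma sum_acoef_ge:
  assumes "N \<ge> 1"
  shows "(\<Sum>k=1..N. acoef N R k) \<ge> 6 * (\<Sum>k=1..N. delta R k)"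
proof -
  have "6 * (\<Sum>k=1..N. delta R k)
      = (\<Sum>k=1..N. 2 * delta R k + 4 * (if k < N then delta R (Suc k) else 0))"
    using sum_delta_shift[OF assms, of R] by (simp add: sum.distrib sum_distrib_left[symmetric])
  also have "\<dots> \<le> (\<Sum>k=1..N. acoef N R k)"
    by (intro sum_mono acoef_ge) simp
  finally show ?thesis .
qed

lemma one_minus_inv_e_bound:
  fixes T D :: real
  assumes "0 \<le> D" "4 * D \<le> T"
  shows "(1 - 1 / exp 1) * (T + 2 * D) \<le> T"
proof -
  have "exp (1::real) \<le> 3"
    by (rule exp_le)
  then have "(exp 1 - 1) * (2 * D) \<le> T"
    using assms mult_right_mono[of "exp 1 - 1" 2 "2 * D"] by linarith
  then show ?thesis
    by (simp add: field_simps)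
qed

theorem theorem1:
  fixes N :: nat and R :: "nat \<Rightarrow> nat \<Rightarrow> complex" and g :: "nat \<Rightarrow> complex"
  assumes "N \<ge> 1"
    and "hermitian N R"
    and "greedy_output N R g"
    and "Re (mtrace N (Rbar N R)) \<le> Re (mtrace N R)"
  shows "Re (qform N R g) \<ge> (1 - 1 / exp 1) * (SUP s \<in> {s. unimod_vec N s \<and> (\<forall>i. i \<notin> {1..N} \<longrightarrow> s i = 0)}. Re (qform N R s))"
proof -
  define T where "T = (\<Sum>k=1..N. Re (R k k))"
  define D where "D = (\<Sum>k=1..N. delta R k)"
  let ?S = "{s. unimod_vec N s \<and> (\<forall>i. i \<notin> {1..N} \<longrightarrow> s i = 0)}"
  have "Re (mtrace N (Rbar N R)) = (\<Sum>k=1..N. acoef N R k)" "Re (mtrace N R) = T"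
    unfolding mtrace_def Rbar_def T_def by simp_all
  with assms(4) sum_acoef_ge[OF assms(1), of R] have trace: "6 * D \<le> T"
    unfolding D_def by linarith
  have D_nonneg: "0 \<le> D"
    unfolding D_def by (simp add: sum_nonneg delta_nonneg)
  have optimum: "(SUP s \<in> ?S. Re (qform N R s)) \<le> T + 2 * D"
  proof (rule cSUP_least)
    have "(\<lambda>i. if i \<in> {1..N} then 1 else 0) \<in> ?S"
      by (auto simp: unimod_vec_def)
    then show "?S \<noteq> {}"
      by blast
    show "Re (qform N R s) \<le> T + 2 * D" if "s \<in> ?S" for s
      using Re_qform_le_trace_plus_delta[OF assms(2), of s N] that
      unfolding T_def D_def by (simp add: sum.distrib sum_distrib_left)
  qed
  have "(1 - 1 / exp 1) * (SUP s \<in> ?S. Re (qform N R s)) \<le> (1 - 1 / exp 1) * (T + 2 * D)"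
    by (rule mult_left_mono[OF optimum]) simp
  also have "\<dots> \<le> T"
    using D_nonneg trace by (intro one_minus_inv_e_bound) auto
  also have "T \<le> Re (qform N R g)"
    unfolding T_def by (rule greedy_Re_qform_ge_trace[OF assms(2,3) order_refl])
  finally show ?thesis .
qed

end
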